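(* Let $q\ge0$, let $(\varepsilon_t)_{t\in\mathbb Z}$ be i.i.d. real random variables with a continuous distribution, and let $X_t=\sum_{l=0}^q\varepsilon_{t-l}$ (MA($q$) process with equal weights). For OPs of length $m=2$, the long-run covariance matrix is $$\Sigma=\frac1{12}\begin{pmatrix}1&-1\\-1&1\end{pmatrix},$$ independently of $q$ and of the distribution of $\varepsilon_t$.
   Context: For $m=2$ the OPs are $\pi_1=(1,2)$ (i.e. $X_t<X_{t+1}$) and $\pi_2=(2,1)$ (i.e. $X_t>X_{t+1}$); $\Pi_t$ is the OP of $(X_t,X_{t+1})$, $p_i=\mathbb P(\Pi_0=\pi_i)$, $p_{ij}(k)=\mathbb P(\Pi_0=\pi_i,\Pi_k=\pi_j)$, and the long-run covariance matrix is $\Sigma=(\sigma_{ij})$ with $\sigma_{ij}=p_i(\delta_{ij}-p_j)+\sum_{k=1}^\infty\big(p_{ij}(k)+p_{ji}(k)-2p_ip_j\big)$, $\delta_{ij}$ the Kronecker delta. *)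

theory Defs
  imports "HOL-Probability.Probability"
begin

text \<open>Ordinal pattern of length m = 2 of (X t, X (t+1)):
  1 encodes pi_1 = (1,2), i.e. X t < X (t+1); 2 encodes pi_2 = (2,1), i.e. X t > X (t+1).
  Ties (probability zero under the hypotheses) are given the code 0, which is neither pattern.\<close>
definition op2 :: "(int \<Rightarrow> 'a \<Rightarrow> real) \<Rightarrow> int \<Rightarrow> 'a \<Rightarrow> nat" where
  "op2 X t \<omega> = (if X t \<omega> < X (t + 1) \<omega> then 1
                 else if X t \<omega> > X (t + 1) \<omega> then 2 else 0)"

definition op_prob :: "'a measure \<Rightarrow> (int \<Rightarrow> 'a \<Rightarrow> real) \<Rightarrow> nat \<Rightarrow> real" where
  "op_prob M X i = measure M {\<omega> \<in> space M. op2 X 0 \<omega> = i}"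

definition op_joint :: "'a measure \<Rightarrow> (int \<Rightarrow> 'a \<Rightarrow> real) \<Rightarrow> nat \<Rightarrow> nat \<Rightarrow> nat \<Rightarrow> real" where
  "op_joint M X i j k = measure M {\<omega> \<in> space M. op2 X 0 \<omega> = i \<and> op2 X (int k) \<omega> = j}"

text \<open>Summand (for k = 1, 2, ...) of the long-run covariance series; indexed from 0 via k+1.\<close>
definition lrcov_term :: "'a measure \<Rightarrow> (int \<Rightarrow> 'a \<Rightarrow> real) \<Rightarrow> nat \<Rightarrow> nat \<Rightarrow> nat \<Rightarrow> real" where
  "lrcov_term M X i j k = op_joint M X i j (Suc k) + op_joint M X j i (Suc k)
                          - 2 * op_prob M X i * op_prob M X j"

definition lrcov :: "'a measure \<Rightarrow> (int \<Rightarrow> 'a \<Rightarrow> real) \<Rightarrow> nat \<Rightarrow> nat \<Rightarrow> real" where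
  "lrcov M X i j = op_prob M X i * ((if i = j then 1 else 0) - op_prob M X j)
                   + (\<Sum>k. lrcov_term M X i j k)"

end

theory Submission
  imports Defs
begin

text \<open>
  The increments of the moving sum telescope, X (t + 1) - X t = \<epsilon> (t + 1) - \<epsilon> (t - q), so the
  pattern at time t only compares \<epsilon> (t - q) with \<epsilon> (t + 1). Values of i.i.d. variables with
  an atomless law are almost surely pairwise distinct and exchangeable, so an event on their
  relative order has its combinatorial probability. Hence p_i = 1/2, and p_ij(k) = 1/4 whenever
  k \<noteq> q + 1, because the two comparisons then involve four distinct indices; these terms of
  the series vanish. At lag k = q + 1 both comparisons involve \<epsilon> 1: p_ii(q + 1) = 1/6
  (a monotone chain) and p_ij(q + 1) = 1/3 for i \<noteq> j (a peak or a valley). So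
  sigma_ii = 1/4 + (1/3 - 1/2) = 1/12 and sigma_12 = -1/4 + (2/3 - 1/2) = -1/12.
\<close>

lemma (in prob_space) indep_sets_reindex:
  assumes "indep_sets F (g ` I)" "inj_on g I"
  shows "indep_sets (\<lambda>i. F (g i)) I"
  unfolding indep_sets_def
proof (intro conjI ballI allI impI)
  fix i assume "i \<in> I"
  then show "F (g i) \<subseteq> events"
    using assms(1) by (auto simp: indep_sets_def)
next
  fix J A assume J: "J \<subseteq> I" "J \<noteq> {}" "finite J" and A: "A \<in> Pi J (\<lambda>i. F (g i))"
  have inj: "inj_on g J"
    using assms(2) J inj_on_subset by blast
  define B where "B = (\<lambda>y. A (the_inv_into J g y))"
  have B: "B (g j) = A j" if "j \<in> J" for j
    using the_inv_into_f_f[OF inj that] by (simp add: B_def)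
  have "prob (\<Inter>j\<in>g ` J. B j) = (\<Prod>j\<in>g ` J. prob (B j))"
    using assms(1) by (rule indep_setsD) (use J A B in auto)
  moreover have "(\<Inter>j\<in>g ` J. B j) = (\<Inter>j\<in>J. A j)"
    using B by auto
  moreover have "(\<Prod>j\<in>g ` J. prob (B j)) = (\<Prod>j\<in>J. prob (A j))"
    by (simp add: prod.reindex[OF inj] B)
  ultimately show "prob (\<Inter>j\<in>J. A j) = (\<Prod>j\<in>J. prob (A j))"
    by simp
qed

lemma (in prob_space) indep_vars_reindex:
  assumes "indep_vars M' X K" "inj_on g I" "g ` I \<subseteq> K"
  shows "indep_vars (\<lambda>i. M' (g i)) (\<lambda>i. X (g i)) I"
proof -
  have "indep_sets (\<lambda>i. sigma_sets (space M) {X i -` A \<inter> space M | A. A \<in> sets (M' i)}) (g ` I)"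
    using assms(1,3) unfolding indep_vars_def by (auto intro: indep_sets_mono_index)
  from indep_sets_reindex[OF this assms(2)] show ?thesis
    using assms(1,3) unfolding indep_vars_def by auto
qed

lemma (in prob_space) has_bochner_integral_sum_list_indicator:
  assumes "set Es \<subseteq> events"
  shows "has_bochner_integral M (\<lambda>\<omega>. \<Sum>E\<leftarrow>Es. indicator E \<omega> :: real) (\<Sum>E\<leftarrow>Es. prob E)"
  using assms
  by (induction Es) (auto intro!: has_bochner_integral_real_indicator simp: less_top[symmetric])

lemma (in prob_space) sum_list_prob_eq_AE:
  assumes "set Es \<subseteq> events" "set Fs \<subseteq> events"
    and "AE \<omega> in M. (\<Sum>E\<leftarrow>Es. indicator E \<omega>) = (\<Sum>F\<leftarrow>Fs. indicator F \<omega> :: real)"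
  shows "(\<Sum>E\<leftarrow>Es. prob E) = (\<Sum>F\<leftarrow>Fs. prob F)"
  using has_bochner_integral_sum_list_indicator[OF assms(1)]
    has_bochner_integral_sum_list_indicator[OF assms(2)] assms(3)
  by (rule has_bochner_integral_eq_AE)

lemma (in prob_space) prob_eq_inverse_length_if_AE_partition:
  assumes "set Es \<subseteq> events" "AE \<omega> in M. (\<Sum>E\<leftarrow>Es. indicator E \<omega>) = (1::real)"
    and "\<And>E. E \<in> set Es \<Longrightarrow> prob E = p"
  shows "p = 1 / length Es"
proof -
  have "(\<Sum>E\<leftarrow>Es. prob E) = (\<Sum>F\<leftarrow>[space M]. prob F)"
    by (rule sum_list_prob_eq_AE) (use assms(1,2) in auto)
  moreover have "(\<Sum>E\<leftarrow>Es. prob E) = (\<Sum>E\<leftarrow>Es. p)"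
    using assms(3) by (metis map_eq_conv)
  ultimately have "length Es * p = 1"
    by (simp add: sum_list_triv prob_space)
  then show ?thesis
    by (cases "length Es = 0") (auto simp: field_simps)
qed

lemma (in prob_space) emeasure_distr_singleton:
  fixes X :: "'a \<Rightarrow> real"
  assumes "X \<in> borel_measurable M"
  shows "emeasure (distr M borel X) {x} = prob {\<omega> \<in> space M. X \<omega> = x}"
proof -
  have "emeasure (distr M borel X) {x} = emeasure M (X -` {x} \<inter> space M)"
    using assms by (intro emeasure_distr) auto
  also have "X -` {x} \<inter> space M = {\<omega> \<in> space M. X \<omega> = x}"
    by auto
  finally show ?thesis
    by (simp add: emeasure_eq_measure)
qed

lemma sets_borel_diagonal: "{p. fst p = snd p} \<in> sets (borel \<Otimes>\<^sub>M (borel :: real measure))"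
proof -
  have "{p \<in> space (borel \<Otimes>\<^sub>M borel). fst p = snd p} \<in> sets (borel \<Otimes>\<^sub>M (borel :: real measure))"
    by measurable
  then show ?thesis
    by (simp add: space_pair_measure)
qed

lemma emeasure_pair_measure_diagonal:
  fixes \<mu> \<nu> :: "real measure"
  assumes "sets \<mu> = sets borel" "sets \<nu> = sets borel"
    and "sigma_finite_measure \<nu>" "\<And>x. emeasure \<nu> {x} = 0"
  shows "emeasure (\<mu> \<Otimes>\<^sub>M \<nu>) {p. fst p = snd p} = 0"
proof -
  interpret \<nu>: sigma_finite_measure \<nu> by fact
  have "{p. fst p = snd p} \<in> sets (\<mu> \<Otimes>\<^sub>M \<nu>)"
    using sets_borel_diagonal by (simp add: sets_pair_measure_cong[OF assms(1,2)])
  then have "emeasure (\<mu> \<Otimes>\<^sub>M \<nu>) {p. fst p = snd p}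
      = (\<integral>\<^sup>+x. emeasure \<nu> (Pair x -` {p. fst p = snd p}) \<partial>\<mu>)"
    by (rule \<nu>.emeasure_pair_measure_alt)
  also have "\<dots> = 0"
  proof -
    have "Pair x -` {p. fst p = snd p} = {x}" for x :: real
      by auto
    then show ?thesis
      by (simp add: assms(4))
  qed
  finally show ?thesis .
qed

locale iid_continuous = prob_space +
  fixes \<epsilon> :: "'i \<Rightarrow> 'a \<Rightarrow> real"
  assumes random_variable_\<epsilon>[measurable]: "\<And>t. \<epsilon> t \<in> borel_measurable M"
    and indep_\<epsilon>: "indep_vars (\<lambda>_. borel) \<epsilon> UNIV"
    and identically_distributed: "\<And>s t. distr M borel (\<epsilon> s) = distr M borel (\<epsilon> t)"
    and no_atoms: "\<And>t x. emeasure (distr M borel (\<epsilon> t)) {x} = 0"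
begin

lemma prob_tuple_reindex:
  assumes "inj_on g J" "inj_on h J"
    and "{f \<in> space (\<Pi>\<^sub>M j\<in>J. borel). P f} \<in> sets (\<Pi>\<^sub>M j\<in>J. (borel :: real measure))"
  shows "prob {\<omega> \<in> space M. P (\<lambda>j\<in>J. \<epsilon> (g j) \<omega>)} = prob {\<omega> \<in> space M. P (\<lambda>j\<in>J. \<epsilon> (h j) \<omega>)}"
proof (cases "J = {}")
  case False
  let ?S = "{f \<in> space (\<Pi>\<^sub>M j\<in>J. borel). P f}"
  have law: "distr M (\<Pi>\<^sub>M j\<in>J. borel) (\<lambda>\<omega>. \<lambda>j\<in>J. \<epsilon> (k j) \<omega>) = (\<Pi>\<^sub>M j\<in>J. distr M borel (\<epsilon> t))"
    if "inj_on k J" for k t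
  proof -
    have "indep_vars (\<lambda>_. borel) (\<lambda>j. \<epsilon> (k j)) J"
      using indep_vars_reindex[OF indep_\<epsilon> that] by simp
    then have "distr M (\<Pi>\<^sub>M j\<in>J. borel) (\<lambda>\<omega>. \<lambda>j\<in>J. \<epsilon> (k j) \<omega>) = (\<Pi>\<^sub>M j\<in>J. distr M borel (\<epsilon> (k j)))"
      by (subst (asm) indep_vars_iff_distr_eq_PiM[OF False]) auto
    also have "\<dots> = (\<Pi>\<^sub>M j\<in>J. distr M borel (\<epsilon> t))"
      by (intro PiM_cong refl identically_distributed)
    finally show ?thesis .
  qed
  have "prob {\<omega> \<in> space M. P (\<lambda>j\<in>J. \<epsilon> (k j) \<omega>)} = measure (\<Pi>\<^sub>M j\<in>J. distr M borel (\<epsilon> t)) ?S"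
    if "inj_on k J" for k t
  proof -
    have "prob {\<omega> \<in> space M. P (\<lambda>j\<in>J. \<epsilon> (k j) \<omega>)} = prob ((\<lambda>\<omega>. \<lambda>j\<in>J. \<epsilon> (k j) \<omega>) -` ?S \<inter> space M)"
      by (rule arg_cong[where f = prob]) (auto simp: space_PiM)
    also have "\<dots> = measure (distr M (\<Pi>\<^sub>M j\<in>J. borel) (\<lambda>\<omega>. \<lambda>j\<in>J. \<epsilon> (k j) \<omega>)) ?S"
      by (rule measure_distr[OF _ assms(3), symmetric]) measurable
    also have "\<dots> = measure (\<Pi>\<^sub>M j\<in>J. distr M borel (\<epsilon> t)) ?S"
      using law[OF that] by simp
    finally show ?thesis .
  qed
  from this[OF assms(1)] this[OF assms(2)] show ?thesis
    by simp
qed (simp add: restrict_def)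

lemma prob_list_tuple_eq:
  assumes "distinct xs" "distinct ys" "length xs = n" "length ys = n"
    and "{f \<in> space (\<Pi>\<^sub>M i\<in>{..<n}. borel). P f} \<in> sets (\<Pi>\<^sub>M i\<in>{..<n}. (borel :: real measure))"
  shows "prob {\<omega> \<in> space M. P (\<lambda>i\<in>{..<n}. \<epsilon> (xs ! i) \<omega>)}
       = prob {\<omega> \<in> space M. P (\<lambda>i\<in>{..<n}. \<epsilon> (ys ! i) \<omega>)}"
  by (rule prob_tuple_reindex) (use assms in \<open>auto simp: inj_on_def distinct_conv_nth\<close>)

lemma AE_neq:
  assumes "s \<noteq> t"
  shows "AE \<omega> in M. \<epsilon> s \<omega> \<noteq> \<epsilon> t \<omega>"
proof -
  let ?\<mu> = "distr M borel (\<epsilon> s)" and ?\<nu> = "distr M borel (\<epsilon> t)"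
  have "indep_vars (\<lambda>_. borel) (\<lambda>b. \<epsilon> (case_bool s t b)) UNIV"
    by (rule indep_vars_reindex[OF indep_\<epsilon>])
      (use assms in \<open>auto simp: inj_on_def split: bool.split\<close>)
  moreover have "(\<lambda>b. \<epsilon> (case_bool s t b)) = case_bool (\<epsilon> s) (\<epsilon> t)"
    "(\<lambda>_::bool. borel) = case_bool borel borel"
    by (auto split: bool.split)
  ultimately have "indep_var borel (\<epsilon> s) borel (\<epsilon> t)"
    unfolding indep_var_def by metis
  then have law: "distr M (borel \<Otimes>\<^sub>M borel) (\<lambda>\<omega>. (\<epsilon> s \<omega>, \<epsilon> t \<omega>)) = ?\<mu> \<Otimes>\<^sub>M ?\<nu>"
    by (simp add: indep_var_distribution_eq)
  have "emeasure (?\<mu> \<Otimes>\<^sub>M ?\<nu>) {p. fst p = snd p} = 0"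
    by (intro emeasure_pair_measure_diagonal prob_space_imp_sigma_finite prob_space_distr no_atoms)
      simp_all
  moreover have "(\<lambda>\<omega>. (\<epsilon> s \<omega>, \<epsilon> t \<omega>)) -` {p. fst p = snd p} \<inter> space M
      = {\<omega> \<in> space M. \<epsilon> s \<omega> = \<epsilon> t \<omega>}"
    by auto
  ultimately have "emeasure M {\<omega> \<in> space M. \<epsilon> s \<omega> = \<epsilon> t \<omega>} = 0"
    using emeasure_distr[OF _ sets_borel_diagonal, of "\<lambda>\<omega>. (\<epsilon> s \<omega>, \<epsilon> t \<omega>)" M] law by simp
  then have "{\<omega> \<in> space M. \<epsilon> s \<omega> = \<epsilon> t \<omega>} \<in> null_sets M"
    by (auto simp: null_sets_def)
  from AE_not_in[OF this] AE_space show ?thesis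
    by eventually_elim auto
qed

lemma AE_distinct_values:
  assumes "distinct ts"
  shows "AE \<omega> in M. distinct (map (\<lambda>t. \<epsilon> t \<omega>) ts)"
proof -
  have "AE \<omega> in M. \<forall>p \<in> set ts \<times> set ts. fst p \<noteq> snd p \<longrightarrow> \<epsilon> (fst p) \<omega> \<noteq> \<epsilon> (snd p) \<omega>"
    by (intro AE_finite_allI) (auto intro: AE_neq)
  then show ?thesis
    by eventually_elim (auto simp: distinct_map assms inj_on_def)
qed

definition less_event :: "'i \<Rightarrow> 'i \<Rightarrow> 'a set" where
  "less_event s t = {\<omega> \<in> space M. \<epsilon> s \<omega> < \<epsilon> t \<omega>}"

lemma less_event_in_events[measurable]: "less_event s t \<in> events"
  unfolding less_event_def by measurable

lemma prob_less_event:
  assumes "s \<noteq> t"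
  shows "prob (less_event s t) = 1/2"
proof -
  have S: "{f \<in> space (\<Pi>\<^sub>M i\<in>{..<2}. borel). f 0 < f 1}
      \<in> sets (\<Pi>\<^sub>M i\<in>{..<2::nat}. (borel :: real measure))"
    by measurable
  have swap: "prob (less_event t s) = prob (less_event s t)"
    using prob_list_tuple_eq[OF _ _ _ _ S, of "[t, s]" "[s, t]"] assms by (simp add: less_event_def)
  let ?Es = "[less_event s t, less_event t s]"
  have "prob (less_event s t) = 1 / length ?Es"
  proof (rule prob_eq_inverse_length_if_AE_partition)
    from assms have "distinct [s, t]"
      by simp
    from AE_distinct_values[OF this] AE_space
    show "AE \<omega> in M. (\<Sum>E\<leftarrow>?Es. indicator E \<omega>) = (1::real)"
      by eventually_elim (auto simp: less_event_def indicator_def)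
  qed (use swap in auto)
  then show ?thesis
    by simp
qed

lemma prob_less_event_Int_less_event:
  assumes "distinct [a, b, c, d]"
  shows "prob (less_event a b \<inter> less_event c d) = 1/4"
proof -
  have S: "{f \<in> space (\<Pi>\<^sub>M i\<in>{..<4}. borel). f 0 < f 1 \<and> f 2 < f 3}
      \<in> sets (\<Pi>\<^sub>M i\<in>{..<4::nat}. (borel :: real measure))"
    by measurable
  have swap: "prob (less_event a' b' \<inter> less_event c' d') = prob (less_event a b \<inter> less_event c d)"
    if "distinct [a', b', c', d']" for a' b' c' d'
  proof -
    have "less_event a b \<inter> less_event c d = {\<omega> \<in> space M. \<epsilon> a \<omega> < \<epsilon> b \<omega> \<and> \<epsilon> c \<omega> < \<epsilon> d \<omega>}"
      for a b c d
      by (auto simp: less_event_def)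
    then show ?thesis
      using prob_list_tuple_eq[OF that assms _ _ S] by simp
  qed
  let ?Es = "[less_event a b \<inter> less_event c d, less_event b a \<inter> less_event c d,
    less_event a b \<inter> less_event d c, less_event b a \<inter> less_event d c]"
  have "prob (less_event a b \<inter> less_event c d) = 1 / length ?Es"
  proof (rule prob_eq_inverse_length_if_AE_partition)
    from AE_distinct_values[OF assms] AE_space
    show "AE \<omega> in M. (\<Sum>E\<leftarrow>?Es. indicator E \<omega>) = (1::real)"
      by eventually_elim (auto simp: less_event_def indicator_def)
  qed (use assms swap[of b a c d] swap[of a b d c] swap[of b a d c] in auto)
  then show ?thesis
    by simp
qed

lemma prob_last_is_max:
  assumes "distinct [a, b, c]"
  shows "prob (less_event a c \<inter> less_event b c) = 1/3"
proof -
  have S: "{f \<in> space (\<Pi>\<^sub>M i\<in>{..<3}. borel). f 0 < f 2 \<and> f 1 < f 2}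
      \<in> sets (\<Pi>\<^sub>M i\<in>{..<3::nat}. (borel :: real measure))"
    by measurable
  have swap: "prob (less_event a' c' \<inter> less_event b' c') = prob (less_event a c \<inter> less_event b c)"
    if "distinct [a', b', c']" for a' b' c'
  proof -
    have "less_event a c \<inter> less_event b c = {\<omega> \<in> space M. \<epsilon> a \<omega> < \<epsilon> c \<omega> \<and> \<epsilon> b \<omega> < \<epsilon> c \<omega>}"
      for a b c
      by (auto simp: less_event_def)
    then show ?thesis
      using prob_list_tuple_eq[OF that assms _ _ S] by simp
  qed
  let ?Es = "[less_event a c \<inter> less_event b c, less_event a b \<inter> less_event c b,
    less_event b a \<inter> less_event c a]"
  have "prob (less_event a c \<inter> less_event b c) = 1 / length ?Es"
  proof (rule prob_eq_inverse_length_if_AE_partition)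
    from AE_distinct_values[OF assms] AE_space
    show "AE \<omega> in M. (\<Sum>E\<leftarrow>?Es. indicator E \<omega>) = (1::real)"
      by eventually_elim (auto simp: less_event_def indicator_def)
  qed (use assms swap[of a c b] swap[of b c a] in auto)
  then show ?thesis
    by simp
qed

lemma prob_last_is_min:
  assumes "distinct [a, b, c]"
  shows "prob (less_event c a \<inter> less_event c b) = 1/3"
proof -
  have S: "{f \<in> space (\<Pi>\<^sub>M i\<in>{..<3}. borel). f 2 < f 0 \<and> f 2 < f 1}
      \<in> sets (\<Pi>\<^sub>M i\<in>{..<3::nat}. (borel :: real measure))"
    by measurable
  have swap: "prob (less_event c' a' \<inter> less_event c' b') = prob (less_event c a \<inter> less_event c b)"
    if "distinct [a', b', c']" for a' b' c'
  proof -
    have "less_event c a \<inter> less_event c b = {\<omega> \<in> space M. \<epsilon> c \<omega> < \<epsilon> a \<omega> \<and> \<epsilon> c \<omega> < \<epsilon> b \<omega>}"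
      for a b c
      by (auto simp: less_event_def)
    then show ?thesis
      using prob_list_tuple_eq[OF that assms _ _ S] by simp
  qed
  let ?Es = "[less_event c a \<inter> less_event c b, less_event b a \<inter> less_event b c,
    less_event a b \<inter> less_event a c]"
  have "prob (less_event c a \<inter> less_event c b) = 1 / length ?Es"
  proof (rule prob_eq_inverse_length_if_AE_partition)
    from AE_distinct_values[OF assms] AE_space
    show "AE \<omega> in M. (\<Sum>E\<leftarrow>?Es. indicator E \<omega>) = (1::real)"
      by eventually_elim (auto simp: less_event_def indicator_def)
  qed (use assms swap[of a c b] swap[of b c a] in auto)
  then show ?thesis
    by simp
qed

lemma prob_increasing_triple:
  assumes "distinct [a, b, c]"
  shows "prob (less_event a b \<inter> less_event b c) = 1/6"
proof -
  let ?Es = "[less_event a b \<inter> less_event b c, less_event a b \<inter> less_event c b]"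
  from AE_distinct_values[OF assms] AE_space
  have "AE \<omega> in M. (\<Sum>E\<leftarrow>?Es. indicator E \<omega>) = (\<Sum>E\<leftarrow>[less_event a b]. indicator E \<omega> :: real)"
    by eventually_elim (auto simp: less_event_def indicator_def)
  then have "prob (less_event a b \<inter> less_event b c) + prob (less_event a b \<inter> less_event c b)
      = prob (less_event a b)"
    using sum_list_prob_eq_AE[of ?Es "[less_event a b]"] by simp
  moreover have "prob (less_event a b \<inter> less_event c b) = 1/3"
    using prob_last_is_max[of a c b] assms by auto
  ultimately show ?thesis
    using prob_less_event[of a b] assms by simp
qed

end

lemma moving_sum_increment:
  fixes f :: "int \<Rightarrow> 'b::ab_group_add"
  shows "(\<Sum>l = 0..q. f (t + 1 - int l)) - (\<Sum>l = 0..q. f (t - int l)) = f (t + 1) - f (t - int q)"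
proof (induction q)
  case (Suc q)
  have "t + 1 - int (Suc q) = t - int q"
    by simp
  with Suc show ?case
    by (simp add: sum.atLeast0_atMost_Suc algebra_simps)
qed simp

locale equal_weight_ma = iid_continuous M \<epsilon> for M :: "'a measure" and \<epsilon> :: "int \<Rightarrow> 'a \<Rightarrow> real" +
  fixes q :: nat and X :: "int \<Rightarrow> 'a \<Rightarrow> real"
  assumes X_eq: "\<And>t \<omega>. X t \<omega> = (\<Sum>l = 0..q. \<epsilon> (t - int l) \<omega>)"
begin

lemma increment_eq: "X (t + 1) \<omega> - X t \<omega> = \<epsilon> (t + 1) \<omega> - \<epsilon> (t - int q) \<omega>"
  unfolding X_eq by (rule moving_sum_increment)

lemma op2_event_eq:
  assumes "i \<in> {1, 2}"
  shows "{\<omega> \<in> space M. op2 X t \<omega> = i}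
    = (if i = 1 then less_event (t - int q) (t + 1) else less_event (t + 1) (t - int q))"
proof -
  have "X t \<omega> < X (t + 1) \<omega> \<longleftrightarrow> \<epsilon> (t - int q) \<omega> < \<epsilon> (t + 1) \<omega>"
    "X (t + 1) \<omega> < X t \<omega> \<longleftrightarrow> \<epsilon> (t + 1) \<omega> < \<epsilon> (t - int q) \<omega>" for \<omega>
    using increment_eq[of t \<omega>] by linarith+
  then show ?thesis
    using assms by (auto simp: op2_def less_event_def)
qed

lemma op_prob_eq:
  assumes "i \<in> {1, 2}"
  shows "op_prob M X i = 1/2"
  using assms by (simp add: op_prob_def op2_event_eq prob_less_event)

lemma op_joint_eq_prob_Int:
  "op_joint M X i j k = prob ({\<omega> \<in> space M. op2 X 0 \<omega> = i} \<inter> {\<omega> \<in> space M. op2 X (int k) \<omega> = j})"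
  unfolding op_joint_def by (rule arg_cong[where f = prob]) auto

lemma op_joint_Suc_q:
  assumes "i \<in> {1, 2}" "j \<in> {1, 2}"
  shows "op_joint M X i j (Suc q) = (if i = j then 1/6 else 1/3)"
proof -
  have "distinct [- int q, 1, 2 + int q]" "distinct [- int q, 2 + int q, 1]"
    "distinct [2 + int q, 1, - int q]"
    by auto
  note triple = prob_increasing_triple[OF this(1)] prob_last_is_max[OF this(2)]
    prob_last_is_min[OF this(2)] prob_increasing_triple[OF this(3)]
  have "prob (less_event 1 (- int q) \<inter> less_event (2 + int q) 1) = 1/6"
    using triple(4) by (simp add: Int_commute)
  with triple show ?thesis
    using assms by (auto simp: op_joint_eq_prob_Int op2_event_eq)
qed

lemma op_joint_Suc:
  assumes "i \<in> {1, 2}" "j \<in> {1, 2}" "k \<noteq> q"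
  shows "op_joint M X i j (Suc k) = 1/4"
  using assms by (auto simp: op_joint_eq_prob_Int op2_event_eq prob_less_event_Int_less_event)

lemma lrcov_term_eq:
  assumes "i \<in> {1, 2}" "j \<in> {1, 2}"
  shows "lrcov_term M X i j k = (if k = q then if i = j then - 1/6 else 1/6 else 0)"
  using assms by (cases "k = q") (auto simp: lrcov_term_def op_prob_eq op_joint_Suc_q op_joint_Suc)

lemma lrcov_term_sums:
  assumes "i \<in> {1, 2}" "j \<in> {1, 2}"
  shows "lrcov_term M X i j sums (if i = j then - 1/6 else 1/6)"
  unfolding lrcov_term_eq[OF assms] by (rule sums_single)

lemma lrcov_eq:
  assumes "i \<in> {1, 2}" "j \<in> {1, 2}"
  shows "lrcov M X i j = (if i = j then 1/12 else - 1/12)"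
  using assms
  by (simp add: lrcov_def op_prob_eq sums_unique[OF lrcov_term_sums[OF assms], symmetric])

end

theorem proposition3p1:
  fixes M :: "'a measure" and \<epsilon> :: "int \<Rightarrow> 'a \<Rightarrow> real" and q :: nat
    and X :: "int \<Rightarrow> 'a \<Rightarrow> real"
  assumes "prob_space M"
    and "\<And>t. \<epsilon> t \<in> borel_measurable M"
    and "prob_space.indep_vars M (\<lambda>_. borel) \<epsilon> UNIV"
    and "\<And>t. distr M borel (\<epsilon> t) = distr M borel (\<epsilon> 0)"
    and "\<And>x. measure M {\<omega> \<in> space M. \<epsilon> 0 \<omega> = x} = 0"
    and "\<And>t \<omega>. X t \<omega> = (\<Sum>l = 0..q. \<epsilon> (t - int l) \<omega>)"
  shows "\<forall>i\<in>{1,2}. \<forall>j\<in>{1,2}.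
           summable (lrcov_term M X i j) \<and>
           lrcov M X i j = (if i = j then 1 / 12 else - 1 / 12)"
proof -
  interpret prob_space M
    by fact
  have "emeasure (distr M borel (\<epsilon> t)) {x} = 0" for t x
    using emeasure_distr_singleton[OF assms(2)] assms(5) by (simp add: assms(4)[of t])
  then interpret equal_weight_ma M \<epsilon> q X
  proof unfold_locales
    show "distr M borel (\<epsilon> s) = distr M borel (\<epsilon> t)" for s t
      using assms(4)[of s] assms(4)[of t] by simp
  qed (use assms(2,3,6) in auto)
  show ?thesis
  proof (intro ballI conjI)
    fix i j :: nat
    assume ij: "i \<in> {1, 2}" "j \<in> {1, 2}"
    show "summable (lrcov_term M X i j)"
      using lrcov_term_sums[OF ij] by (rule sums_summable)
    show "lrcov M X i j = (if i = j then 1 / 12 else - 1 / 12)"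
      using ij by (rule lrcov_eq)
  qed
qed

end
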